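(* Let $(\mathfrak{h},\langle\cdot,\cdot\rangle)$ be a Kundt pair on $\mathfrak{sol}$. Then it is equivalent to $(\mathfrak{h}_0,\langle\cdot,\cdot\rangle_0)$ where, with matrices taken in the basis $(X_1,X_2,X_3)$, either (1) $\langle\cdot,\cdot\rangle_0=\begin{pmatrix}\lambda&0&0\\0&0&-1\\0&-1&0\end{pmatrix}$, $\lambda>0$, and $\mathfrak{h}_0=\mathrm{span}\{X_2,X_1\}$ or $\mathfrak{h}_0=\mathrm{span}\{X_3,X_1\}$; (2) $\langle\cdot,\cdot\rangle_0=\begin{pmatrix}\lambda^2&0&0\\0&\lambda&1\\0&1&0\end{pmatrix}$, $\lambda\neq 0$, and $\mathfrak{h}_0=\mathrm{span}\{X_3,X_1\}$; (3) $\langle\cdot,\cdot\rangle_0=\begin{pmatrix}0&0&-\frac{2}{b}\\0&1&1\\-\frac{2}{b}&1&1\end{pmatrix}$, $b>0$, and $\mathfrak{h}_0=\mathrm{span}\{X_2,X_3\}$; or (4) $\langle\cdot,\cdot\rangle_0=\begin{pmatrix}0&0&1\\0&1&0\\1&0&0\end{pmatrix}$ and $\mathfrak{h}_0=\mathrm{span}\{X_2,X_3\}$.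
   Context: $\mathfrak{sol}$ has basis $(X_1,X_2,X_3)$ with only nonzero brackets $[X_1,X_2]=X_2$, $[X_1,X_3]=-X_3$. For a Lorentzian scalar product $\langle\cdot,\cdot\rangle$ on a Lie algebra $\mathfrak{g}$, the Levi-Civita product is defined by $2\langle u\bullet v,w\rangle=\langle[u,v],w\rangle+\langle[w,u],v\rangle+\langle[w,v],u\rangle$. A Kundt pair on $\mathfrak{g}$ is a pair consisting of a Lorentzian scalar product $\langle\cdot,\cdot\rangle$ and a codimension one subalgebra $\mathfrak{h}$ which is $\langle\cdot,\cdot\rangle$-degenerate, stable by $\bullet$, and such that $e\bullet e=0$ for all $e\in\mathfrak{h}^\perp$. Two Kundt pairs $(\mathfrak{h}_1,\langle\cdot,\cdot\rangle_1)$, $(\mathfrak{h}_2,\langle\cdot,\cdot\rangle_2)$ are equivalent if there is a Lie algebra automorphism $\phi$ of $\mathfrak{g}$ with $\phi(\mathfrak{h}_1)=\mathfrak{h}_2$ and $\phi^*\langle\cdot,\cdot\rangle_2=\langle\cdot,\cdot\rangle_1$. *)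

theory Defs
  imports "HOL-Analysis.Analysis"
begin

text \<open>The Lie algebra sol is modelled on real^3; the vector u corresponds to
  u$1 X1 + u$2 X2 + u$3 X3, so X_i = axis i 1.\<close>

definition X :: "3 \<Rightarrow> real^3" where
  "X i = axis i 1"

text \<open>Lie bracket of sol: [X1,X2] = X2, [X1,X3] = -X3, [X2,X3] = 0 (bilinear, skew).\<close>
definition sol_br :: "real^3 \<Rightarrow> real^3 \<Rightarrow> real^3" where
  "sol_br u v = (u$1 * v$2 - u$2 * v$1) *\<^sub>R X 2 - (u$1 * v$3 - u$3 * v$1) *\<^sub>R X 3"

definition sp :: "real^3^3 \<Rightarrow> real^3 \<Rightarrow> real^3 \<Rightarrow> real" where
  "sp S u v = u \<bullet> (S *v v)"

definition mat3 :: "real \<Rightarrow> real \<Rightarrow> real \<Rightarrow> real \<Rightarrow> real \<Rightarrow> real \<Rightarrow> real \<Rightarrow> real \<Rightarrow> real \<Rightarrow> real^3^3" where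
  "mat3 a11 a12 a13 a21 a22 a23 a31 a32 a33 =
     (\<chi> i j. if i = 1 then (if j = 1 then a11 else if j = 2 then a12 else a13)
             else if i = 2 then (if j = 1 then a21 else if j = 2 then a22 else a23)
             else (if j = 1 then a31 else if j = 2 then a32 else a33))"

definition lorentzian :: "real^3^3 \<Rightarrow> bool" where
  "lorentzian S \<longleftrightarrow> transpose S = S \<and>
     (\<exists>P :: real^3^3. invertible P \<and> transpose P ** S ** P = mat3 (-1) 0 0 0 1 0 0 0 1)"

definition lc :: "real^3^3 \<Rightarrow> real^3 \<Rightarrow> real^3 \<Rightarrow> real^3" where
  "lc S u v = (THE x. \<forall>w. 2 * sp S x w =
      sp S (sol_br u v) w + sp S (sol_br w u) v + sp S (sol_br w v) u)"

definition orth :: "real^3^3 \<Rightarrow> (real^3) set \<Rightarrow> (real^3) set" where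
  "orth S h = {e. \<forall>x\<in>h. sp S e x = 0}"

definition kundt_pair :: "(real^3) set \<Rightarrow> real^3^3 \<Rightarrow> bool" where
  "kundt_pair h S \<longleftrightarrow> lorentzian S \<and>
     subspace h \<and> dim h = 2 \<and> (\<forall>u\<in>h. \<forall>v\<in>h. sol_br u v \<in> h) \<and>
     (\<exists>x\<in>h. x \<noteq> 0 \<and> (\<forall>y\<in>h. sp S x y = 0)) \<and>
     (\<forall>u\<in>h. \<forall>v\<in>h. lc S u v \<in> h) \<and>
     (\<forall>e\<in>orth S h. lc S e e = 0)"

definition sol_aut :: "(real^3 \<Rightarrow> real^3) \<Rightarrow> bool" where
  "sol_aut \<phi> \<longleftrightarrow> linear \<phi> \<and> bij \<phi> \<and> (\<forall>u v. \<phi> (sol_br u v) = sol_br (\<phi> u) (\<phi> v))"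

definition kundt_equiv :: "(real^3) set \<Rightarrow> real^3^3 \<Rightarrow> (real^3) set \<Rightarrow> real^3^3 \<Rightarrow> bool" where
  "kundt_equiv h1 S1 h2 S2 \<longleftrightarrow> (\<exists>\<phi>. sol_aut \<phi> \<and> \<phi> ` h1 = h2 \<and>
     (\<forall>u v. sp S2 (\<phi> u) (\<phi> v) = sp S1 u v))"

end

theory Submission
  imports Defs
begin

text \<open>A codimension-one subalgebra h of sol has an equation x1 = 0, x2 = t x1 or x3 = t x1, and the
  automorphism X1 \<mapsto> -X1, X2 \<leftrightarrow> X3 exchanges the last two shapes. Degeneracy of h provides
  a null vector e \<in> h orthogonal to h, and the Kundt condition lc S e e = 0 unfolds to
  <[w, e], e> = 0 for all w. If h contains X3 and X1 + t X2, taking w = X2 forces e to be a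
  multiple of X3; if h = span {X2, X3}, the restriction of the metric to h is a rank-one form
  with kernel e. In each case these constraints leave exactly enough freedom to normalise the
  Gram matrix by the automorphisms X1 \<mapsto> X1 + a X2 + b X3, X2 \<mapsto> c X2, X3 \<mapsto> d X3, which
  act on Gram matrices by congruence.\<close>

lemma X_nth: "X i $ j = (if j = i then 1 else 0)"
  by (simp add: X_def axis_def)

lemma vec3_eq_iff: "(x::real^3) = y \<longleftrightarrow> x$1 = y$1 \<and> x$2 = y$2 \<and> x$3 = y$3"
  by (auto simp: vec_eq_iff forall_3)

lemma inner_vec3: "(x::real^3) \<bullet> y = x$1 * y$1 + x$2 * y$2 + x$3 * y$3"
  by (simp add: inner_vec_def sum_3)

lemma inner_X [simp]: "x \<bullet> X i = x $ i"
  by (simp add: X_def inner_axis)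

lemma mat3_nth [simp]:
  "mat3 a11 a12 a13 a21 a22 a23 a31 a32 a33 $ 1 $ 1 = a11"
  "mat3 a11 a12 a13 a21 a22 a23 a31 a32 a33 $ 1 $ 2 = a12"
  "mat3 a11 a12 a13 a21 a22 a23 a31 a32 a33 $ 1 $ 3 = a13"
  "mat3 a11 a12 a13 a21 a22 a23 a31 a32 a33 $ 2 $ 1 = a21"
  "mat3 a11 a12 a13 a21 a22 a23 a31 a32 a33 $ 2 $ 2 = a22"
  "mat3 a11 a12 a13 a21 a22 a23 a31 a32 a33 $ 2 $ 3 = a23"
  "mat3 a11 a12 a13 a21 a22 a23 a31 a32 a33 $ 3 $ 1 = a31"
  "mat3 a11 a12 a13 a21 a22 a23 a31 a32 a33 $ 3 $ 2 = a32"
  "mat3 a11 a12 a13 a21 a22 a23 a31 a32 a33 $ 3 $ 3 = a33"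
  by (simp_all add: mat3_def)

lemma mat3_eq_iff: "M = mat3 a11 a12 a13 a21 a22 a23 a31 a32 a33 \<longleftrightarrow>
  M$1$1 = a11 \<and> M$1$2 = a12 \<and> M$1$3 = a13 \<and> M$2$1 = a21 \<and> M$2$2 = a22 \<and> M$2$3 = a23 \<and>
  M$3$1 = a31 \<and> M$3$2 = a32 \<and> M$3$3 = a33"
  by (auto simp: vec_eq_iff forall_3)

lemma mat3_mult_vec_nth [simp]:
  "(mat3 a11 a12 a13 a21 a22 a23 a31 a32 a33 *v x) $ 1 = a11 * x$1 + a12 * x$2 + a13 * x$3"
  "(mat3 a11 a12 a13 a21 a22 a23 a31 a32 a33 *v x) $ 2 = a21 * x$1 + a22 * x$2 + a23 * x$3"
  "(mat3 a11 a12 a13 a21 a22 a23 a31 a32 a33 *v x) $ 3 = a31 * x$1 + a32 * x$2 + a33 * x$3"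
  by (simp_all add: matrix_vector_mult_def sum_3)

lemma mat3_mult_mat3:
  "mat3 a11 a12 a13 a21 a22 a23 a31 a32 a33 ** mat3 b11 b12 b13 b21 b22 b23 b31 b32 b33
   = mat3 (a11*b11+a12*b21+a13*b31) (a11*b12+a12*b22+a13*b32) (a11*b13+a12*b23+a13*b33)
          (a21*b11+a22*b21+a23*b31) (a21*b12+a22*b22+a23*b32) (a21*b13+a22*b23+a23*b33)
          (a31*b11+a32*b21+a33*b31) (a31*b12+a32*b22+a33*b32) (a31*b13+a32*b23+a33*b33)"
  by (simp add: mat3_eq_iff matrix_matrix_mult_def sum_3)

lemma transpose_mat3:
  "transpose (mat3 a11 a12 a13 a21 a22 a23 a31 a32 a33) = mat3 a11 a21 a31 a12 a22 a32 a13 a23 a33"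
  by (simp add: mat3_eq_iff transpose_def)

lemma det_mat3: "det (mat3 a11 a12 a13 a21 a22 a23 a31 a32 a33) =
  a11*a22*a33 + a12*a23*a31 + a13*a21*a32 - a11*a23*a32 - a12*a21*a33 - a13*a22*a31"
  by (simp add: det_3)

lemma symmetric_mat3E:
  assumes "transpose S = S"
  obtains s11 s12 s13 s22 s23 s33 where "S = mat3 s11 s12 s13 s12 s22 s23 s13 s23 s33"
proof
  have "S$i$j = S$j$i" for i j
    using arg_cong[OF assms, of "\<lambda>M. M$j$i"] by (simp add: transpose_def)
  then show "S = mat3 (S$1$1) (S$1$2) (S$1$3) (S$1$2) (S$2$2) (S$2$3) (S$1$3) (S$2$3) (S$3$3)"
    unfolding mat3_eq_iff by simp
qed

lemma sp_eq_inner_transpose: "sp S x w = (transpose S *v x) \<bullet> w"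
  by (simp add: sp_def dot_lmul_matrix[symmetric])

lemma sp_congruence: "sp (transpose A ** S ** A) x y = sp S (A *v x) (A *v y)"
proof -
  have "x \<bullet> (transpose A *v (S *v (A *v y))) = (A *v x) \<bullet> (S *v (A *v y))"
    by (metis dot_lmul_matrix vector_transpose_matrix)
  then show ?thesis
    by (simp add: sp_def matrix_vector_mul_assoc matrix_mul_assoc)
qed

lemma span_X_pair:
  assumes "i \<noteq> j" "k \<noteq> i" "k \<noteq> j"
  shows "span {X i, X j} = {x. x$k = 0}"
proof
  have "subspace {x :: real^3. x$k = 0}"
    by (simp add: subspace_def)
  then show "span {X i, X j} \<subseteq> {x. x$k = 0}"
    using assms by (intro span_minimal) (auto simp: X_nth)
  show "{x. x$k = 0} \<subseteq> span {X i, X j}"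
  proof
    fix x :: "real^3"
    assume "x \<in> {x. x$k = 0}"
    moreover have "m = i \<or> m = j \<or> m = k" for m
      using assms exhaust_3[of i] exhaust_3[of j] exhaust_3[of k] exhaust_3[of m] by metis
    ultimately have "x = x$i *\<^sub>R X i + x$j *\<^sub>R X j"
      using assms by (auto simp: vec_eq_iff X_nth)
    then show "x \<in> span {X i, X j}"
      by (metis span_add span_scale span_base insertI1 insertI2)
  qed
qed

lemma span_X23: "span {X 2, X 3} = {x. x$1 = 0}"
  and span_X31: "span {X 3, X 1} = {x. x$2 = 0}"
  by (simp_all add: span_X_pair)

lemma sol_br_nth [simp]:
  "sol_br u v $ 1 = 0"
  "sol_br u v $ 2 = u$1 * v$2 - u$2 * v$1"
  "sol_br u v $ 3 = u$3 * v$1 - u$1 * v$3"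
  by (simp_all add: sol_br_def X_nth)

lemma sol_br_self [simp]: "sol_br u u = 0"
  by (simp add: vec3_eq_iff)

lemma sol_br_add_left: "sol_br (x + y) u = sol_br x u + sol_br y u"
  and sol_br_scaleR_left: "sol_br (c *\<^sub>R x) u = c *\<^sub>R sol_br x u"
  by (simp_all add: vec3_eq_iff algebra_simps)

text \<open>lc is a definite description; for invertible S the right-hand side, a linear form in w,
  is represented by a unique vector, so the description denotes the intended product.\<close>

lemma sp_lc:
  assumes "invertible S"
  shows "2 * sp S (lc S u v) w = sp S (sol_br u v) w + sp S (sol_br w u) v + sp S (sol_br w v) u"
proof -
  define f where "f w = sp S (sol_br u v) w + sp S (sol_br w u) v + sp S (sol_br w v) u" for w
  have "linear f"
    by (rule linearI) (simp_all add: f_def sp_def sol_br_add_left sol_br_scaleR_left algebra_simps)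
  then have f_inner: "f w = 2 * (adjoint f (1/2) \<bullet> w)" for w
    using adjoint_works[of f w "1/2"] by (simp add: inner_commute)
  have char: "(\<forall>w. 2 * sp S x w = f w) \<longleftrightarrow> transpose S *v x = adjoint f (1/2)" for x
    by (simp add: f_inner sp_eq_inner_transpose vector_eq_rdot)
  have "bij ((*v) (transpose S))"
    using assms by (simp add: transpose_invertible flip: invertible_eq_bij)
  then have "\<exists>!x. \<forall>w. 2 * sp S x w = f w"
    unfolding char by (simp add: bij_iff)
  from theI'[OF this] show ?thesis
    unfolding lc_def f_def by blast
qed

lemma sp_sol_br_null:
  assumes "invertible S" and "lc S e e = 0"
  shows "sp S (sol_br w e) e = 0"
  using sp_lc[OF assms(1), of e e w] assms(2) by (simp add: sp_def)

lemma lorentzian_det_neg: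
  assumes "lorentzian S"
  shows "det S < 0"
proof -
  obtain P :: "real^3^3" where "transpose P ** S ** P = mat3 (-1) 0 0 0 1 0 0 0 1"
    using assms unfolding lorentzian_def by blast
  then have "det (transpose P ** S ** P) = -1"
    by (simp add: det_mat3)
  then have "det P * det S * det P = -1"
    by (simp only: det_mul det_transpose)
  then have "det S * (det P)^2 = -1"
    by (simp add: power2_eq_square algebra_simps)
  then show ?thesis
    by (smt (verit) zero_le_power2 mult_nonneg_nonneg)
qed

lemma codim1_subspace_eq_hyperplane:
  fixes h :: "'a::euclidean_space set"
  assumes "subspace h" and "Suc (dim h) = DIM('a)"
  obtains n where "n \<noteq> 0" and "h = {x. n \<bullet> x = 0}"
proof -
  obtain n :: 'a where "n \<noteq> 0" and "span h \<subseteq> {x. n \<bullet> x = 0}"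
    using lowdim_subset_hyperplane[of h] assms(2) by auto
  moreover have "h = {x. n \<bullet> x = 0}" if "n \<noteq> 0" and "span h \<subseteq> {x. n \<bullet> x = 0}"
    using assms that span_superset[of h]
    by (intro subspace_dim_equal subspace_hyperplane) (auto simp: dim_hyperplane)
  ultimately show ?thesis
    using that by blast
qed

lemma sol_codim1_subalgebra_cases:
  assumes "subspace h" "dim h = 2" and closed: "\<And>u v. u \<in> h \<Longrightarrow> v \<in> h \<Longrightarrow> sol_br u v \<in> h"
  obtains "h = {x. x$1 = 0}" | t where "h = {x. x$2 = t * x$1}" | t where "h = {x. x$3 = t * x$1}"
proof -
  obtain n :: "real^3" where "n \<noteq> 0" and "h = {x. n \<bullet> x = 0}"
    by (rule codim1_subspace_eq_hyperplane[OF assms(1)]) (simp add: assms(2))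
  then have h: "x \<in> h \<longleftrightarrow> n$1 * x$1 + n$2 * x$2 + n$3 * x$3 = 0" for x
    by (simp add: inner_vec3)
  have "n$2 = 0 \<or> n$3 = 0"
  proof -
    let ?u = "n$2 *\<^sub>R X 1 - n$1 *\<^sub>R X 2" and ?v = "n$3 *\<^sub>R X 2 - n$2 *\<^sub>R X 3"
    have "?u \<in> h" "?v \<in> h"
      unfolding h by (simp_all add: X_nth algebra_simps)
    then have "sol_br ?u ?v \<in> h"
      by (rule closed)
    then have "2 * (n$2)^2 * n$3 = 0"
      unfolding h by (simp add: X_nth power2_eq_square algebra_simps)
    then show ?thesis
      by simp
  qed
  moreover have "n$1 \<noteq> 0" if "n$2 = 0" "n$3 = 0"
    using \<open>n \<noteq> 0\<close> that by (auto simp: vec3_eq_iff)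
  ultimately consider "n$2 = 0" "n$3 = 0" "n$1 \<noteq> 0" | "n$3 = 0" "n$2 \<noteq> 0" | "n$2 = 0" "n$3 \<noteq> 0"
    by blast
  then show ?thesis
  proof cases
    case 1
    then have "h = {x. x$1 = 0}"
      using h by auto
    then show ?thesis by (rule that(1))
  next
    case 2
    then have "x \<in> h \<longleftrightarrow> x$2 = (- n$1 / n$2) * x$1" for x
      unfolding h by (auto simp: field_simps)
    then have "h = {x. x$2 = (- n$1 / n$2) * x$1}"
      by blast
    then show ?thesis by (rule that(2))
  next
    case 3
    then have "x \<in> h \<longleftrightarrow> x$3 = (- n$1 / n$3) * x$1" for x
      unfolding h by (auto simp: field_simps)
    then have "h = {x. x$3 = (- n$1 / n$3) * x$1}"
      by blast
    then show ?thesis by (rule that(3))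
  qed
qed

lemma kundt_equiv_refl: "kundt_equiv h S h S"
  unfolding kundt_equiv_def sol_aut_def by (intro exI[of _ id]) (auto simp: linear_id)

lemma kundt_equiv_trans:
  assumes "kundt_equiv h1 S1 h2 S2" and "kundt_equiv h2 S2 h3 S3"
  shows "kundt_equiv h1 S1 h3 S3"
proof -
  obtain \<phi> where \<phi>: "sol_aut \<phi>" "\<phi> ` h1 = h2" "\<And>u v. sp S2 (\<phi> u) (\<phi> v) = sp S1 u v"
    using assms(1) unfolding kundt_equiv_def by blast
  obtain \<psi> where \<psi>: "sol_aut \<psi>" "\<psi> ` h2 = h3" "\<And>u v. sp S3 (\<psi> u) (\<psi> v) = sp S2 u v"
    using assms(2) unfolding kundt_equiv_def by blast
  have "sol_aut (\<psi> \<circ> \<phi>)"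
    using \<phi>(1) \<psi>(1) unfolding sol_aut_def by (auto intro: linear_compose bij_comp)
  moreover have "(\<psi> \<circ> \<phi>) ` h1 = h3"
    using \<phi>(2) \<psi>(2) by (metis image_comp)
  ultimately show ?thesis
    unfolding kundt_equiv_def using \<phi>(3) \<psi>(3) by (intro exI[of _ "\<psi> \<circ> \<phi>"]) simp
qed

text \<open>The equivalence is witnessed by the inverse of A.\<close>

lemma kundt_equiv_by_matrix:
  assumes "invertible A" and br: "\<And>u v. sol_br (A *v u) (A *v v) = A *v sol_br u v"
  shows "kundt_equiv h S {x. A *v x \<in> h} (transpose A ** S ** A)"
proof -
  obtain B where AB: "A ** B = mat 1" and BA: "B ** A = mat 1"
    using assms(1) unfolding invertible_def by blast
  have AB_v: "A *v (B *v x) = x" and BA_v: "B *v (A *v x) = x" for x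
    using AB BA by (simp_all add: matrix_vector_mul_assoc)
  have "bij ((*v) B)"
    using AB BA by (auto simp: invertible_def simp flip: invertible_eq_bij)
  moreover have "sol_br (B *v u) (B *v v) = B *v sol_br u v" for u v
    by (metis br AB_v BA_v)
  ultimately have "sol_aut ((*v) B)"
    unfolding sol_aut_def by simp
  moreover have "(*v) B ` h = {x. A *v x \<in> h}"
    using AB_v BA_v by (auto intro: image_eqI[of _ _ "A *v _"])
  moreover have "sp (transpose A ** S ** A) (B *v u) (B *v v) = sp S u v" for u v
    by (simp add: sp_congruence AB_v)
  ultimately show ?thesis
    unfolding kundt_equiv_def by blast
qed

definition kundt_model :: "(real^3) set \<Rightarrow> real^3^3 \<Rightarrow> bool" where
  "kundt_model h0 S0 \<longleftrightarrow>
    (\<exists>l>0. S0 = mat3 l 0 0 0 0 (-1) 0 (-1) 0 \<and> (h0 = span {X 2, X 1} \<or> h0 = span {X 3, X 1})) \<or>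
    (\<exists>l. l \<noteq> 0 \<and> S0 = mat3 (l^2) 0 0 0 l 1 0 1 0 \<and> h0 = span {X 3, X 1}) \<or>
    (\<exists>b>0. S0 = mat3 0 0 (-2/b) 0 1 1 (-2/b) 1 1 \<and> h0 = span {X 2, X 3}) \<or>
    (S0 = mat3 0 0 1 0 1 0 1 0 0 \<and> h0 = span {X 2, X 3})"

definition equiv_to_kundt_model :: "(real^3) set \<Rightarrow> real^3^3 \<Rightarrow> bool" where
  "equiv_to_kundt_model h S \<longleftrightarrow> (\<exists>h0 S0. kundt_equiv h S h0 S0 \<and> kundt_model h0 S0)"

lemma equiv_to_kundt_modelI: "kundt_model h S \<Longrightarrow> equiv_to_kundt_model h S"
  unfolding equiv_to_kundt_model_def using kundt_equiv_refl by blast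

lemma equiv_to_kundt_model_case1:
    "l > 0 \<Longrightarrow> equiv_to_kundt_model (span {X 3, X 1}) (mat3 l 0 0 0 0 (-1) 0 (-1) 0)"
  and equiv_to_kundt_model_case2:
    "l \<noteq> 0 \<Longrightarrow> equiv_to_kundt_model (span {X 3, X 1}) (mat3 (l^2) 0 0 0 l 1 0 1 0)"
  and equiv_to_kundt_model_case3:
    "b > 0 \<Longrightarrow> equiv_to_kundt_model (span {X 2, X 3}) (mat3 0 0 (-2/b) 0 1 1 (-2/b) 1 1)"
  and equiv_to_kundt_model_case4:
    "equiv_to_kundt_model (span {X 2, X 3}) (mat3 0 0 1 0 1 0 1 0 0)"
  by (auto intro!: equiv_to_kundt_modelI simp only: kundt_model_def)

lemma equiv_to_kundt_model_by_matrix: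
  assumes "invertible A" and "\<And>u v. sol_br (A *v u) (A *v v) = A *v sol_br u v"
    and "equiv_to_kundt_model {x. A *v x \<in> h} (transpose A ** S ** A)"
  shows "equiv_to_kundt_model h S"
  using assms kundt_equiv_by_matrix[OF assms(1,2)] kundt_equiv_trans
  unfolding equiv_to_kundt_model_def by blast

text \<open>Columns are the images of X1, X2, X3: the automorphism X1 \<mapsto> X1 + a X2 + b X3,
  X2 \<mapsto> c X2, X3 \<mapsto> d X3.\<close>

definition aut_matrix :: "real \<Rightarrow> real \<Rightarrow> real \<Rightarrow> real \<Rightarrow> real^3^3" where
  "aut_matrix a b c d = mat3 1 0 0 a c 0 b 0 d"

definition swap_matrix :: "real^3^3" where
  "swap_matrix = mat3 (-1) 0 0 0 0 1 0 1 0"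

lemma sol_br_aut_matrix:
  "sol_br (aut_matrix a b c d *v u) (aut_matrix a b c d *v v) = aut_matrix a b c d *v sol_br u v"
  by (simp add: vec3_eq_iff aut_matrix_def algebra_simps)

lemma invertible_aut_matrix: "c \<noteq> 0 \<Longrightarrow> d \<noteq> 0 \<Longrightarrow> invertible (aut_matrix a b c d)"
  by (simp add: invertible_det_nz aut_matrix_def det_mat3)

lemma gram_aut_matrix:
  "transpose (aut_matrix a b c d) ** mat3 s11 s12 s13 s12 s22 s23 s13 s23 s33 ** aut_matrix a b c d =
    (let g11 = s11 + 2 * a * s12 + 2 * b * s13 + a^2 * s22 + 2 * a * b * s23 + b^2 * s33;
         g12 = c * (s12 + a * s22 + b * s23); g13 = d * (s13 + a * s23 + b * s33)
     in mat3 g11 g12 g13 g12 (c^2 * s22) (c * d * s23) g13 (c * d * s23) (d^2 * s33))"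
  unfolding aut_matrix_def transpose_mat3 mat3_mult_mat3 Let_def mat3_eq_iff mat3_nth
  by (simp add: power2_eq_square algebra_simps)

lemma sol_br_swap_matrix: "sol_br (swap_matrix *v u) (swap_matrix *v v) = swap_matrix *v sol_br u v"
  by (simp add: vec3_eq_iff swap_matrix_def algebra_simps)

lemma swap_matrix_involutive [simp]: "swap_matrix *v (swap_matrix *v x) = x"
  by (simp add: vec3_eq_iff swap_matrix_def)

lemma invertible_swap_matrix: "invertible swap_matrix"
  by (simp add: invertible_det_nz swap_matrix_def det_mat3)

lemma equiv_to_kundt_model_aut_matrix:
  assumes "{x. aut_matrix a b c d *v x \<in> h} = h'"
    and "transpose (aut_matrix a b c d) ** S ** aut_matrix a b c d = S'"
    and "equiv_to_kundt_model h' S'" and "c \<noteq> 0" "d \<noteq> 0"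
  shows "equiv_to_kundt_model h S"
  using assms invertible_aut_matrix sol_br_aut_matrix by (blast intro: equiv_to_kundt_model_by_matrix)

lemma equiv_to_kundt_model_swap_matrix:
  assumes "{x. swap_matrix *v x \<in> h} = h'" and "transpose swap_matrix ** S ** swap_matrix = S'"
    and "equiv_to_kundt_model h' S'"
  shows "equiv_to_kundt_model h S"
  using assms invertible_swap_matrix sol_br_swap_matrix by (blast intro: equiv_to_kundt_model_by_matrix)

text \<open>e spans the null line orthogonal to h, which lies in h; by sp_lc, the Kundt condition
  lc S e e = 0 amounts to the last clause.\<close>

definition kundt_null_vector :: "(real^3) set \<Rightarrow> real^3^3 \<Rightarrow> real^3 \<Rightarrow> bool" where
  "kundt_null_vector h S e \<longleftrightarrow> transpose S = S \<and> det S < 0 \<and> e \<in> h \<and> e \<noteq> 0 \<and>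
     (\<forall>y\<in>h. sp S e y = 0) \<and> (\<forall>w. sp S (sol_br w e) e = 0)"

lemma kundt_pair_null_vector:
  assumes "kundt_pair h S"
  obtains e where "kundt_null_vector h S e"
proof -
  obtain e where e: "e \<in> h" "e \<noteq> 0" "\<forall>y\<in>h. sp S e y = 0"
    using assms unfolding kundt_pair_def by blast
  have "lorentzian S"
    using assms unfolding kundt_pair_def by blast
  then have "transpose S = S" "det S < 0"
    using lorentzian_det_neg unfolding lorentzian_def by blast+
  moreover have "lc S e e = 0"
    using assms e(3) unfolding kundt_pair_def orth_def by blast
  then have "sp S (sol_br w e) e = 0" for w
    using \<open>det S < 0\<close> by (intro sp_sol_br_null) (auto simp: invertible_det_nz)
  ultimately show ?thesis
    using e that unfolding kundt_null_vector_def by blast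
qed

lemma kundt_null_vector_by_matrix:
  assumes e: "kundt_null_vector h S e" and "invertible A"
    and br: "\<And>u v. sol_br (A *v u) (A *v v) = A *v sol_br u v" and "A *v e' = e"
  shows "kundt_null_vector {x. A *v x \<in> h} (transpose A ** S ** A) e'"
proof -
  have "transpose (transpose A ** S ** A) = transpose A ** S ** A"
    using e by (simp add: kundt_null_vector_def matrix_transpose_mul matrix_mul_assoc)
  moreover have "det (transpose A ** S ** A) = det S * (det A)^2"
    by (simp add: det_mul power2_eq_square)
  then have "det (transpose A ** S ** A) < 0"
    using e \<open>invertible A\<close> by (simp add: kundt_null_vector_def invertible_det_nz mult_neg_pos)
  moreover have "e' \<noteq> 0"
    using e \<open>A *v e' = e\<close> by (auto simp: kundt_null_vector_def)
  moreover have "sp (transpose A ** S ** A) (sol_br w e') e' = 0" for w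
    using e \<open>A *v e' = e\<close> by (simp add: kundt_null_vector_def sp_congruence flip: br)
  ultimately show ?thesis
    using e \<open>A *v e' = e\<close> by (simp add: kundt_null_vector_def sp_congruence)
qed

lemma kundt_null_vector_swap_matrix:
  "kundt_null_vector h S e \<Longrightarrow>
    kundt_null_vector {x. swap_matrix *v x \<in> h} (transpose swap_matrix ** S ** swap_matrix)
      (swap_matrix *v e)"
  by (simp add: kundt_null_vector_by_matrix invertible_swap_matrix sol_br_swap_matrix)

lemma kundt_null_vector_covector:
  assumes "kundt_null_vector h S e"
  shows "S *v e \<noteq> 0" and "\<And>y. y \<in> h \<Longrightarrow> (S *v e) \<bullet> y = 0"
    and "\<And>w. sol_br w e \<bullet> (S *v e) = 0"
proof -
  have "invertible S"
    using assms by (simp add: kundt_null_vector_def invertible_det_nz)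
  then have "inj ((*v) S)"
    by (simp add: invertible_eq_bij bij_is_inj)
  then show "S *v e \<noteq> 0"
    using assms by (metis kundt_null_vector_def matrix_vector_mult_0_right injD)
  show "(S *v e) \<bullet> y = 0" if "y \<in> h" for y
    using assms that by (metis kundt_null_vector_def sp_eq_inner_transpose)
  show "sol_br w e \<bullet> (S *v e) = 0" for w
    using assms by (simp add: kundt_null_vector_def sp_def)
qed

lemma equiv_to_kundt_model_x1_eq_0_null_X3:
  assumes h: "h = {x. x$1 = 0}" and "s22 > 0" "s13 \<noteq> 0"
  shows "equiv_to_kundt_model h (mat3 s11 s12 s13 s12 s22 0 s13 0 0)"
proof -
  define a where "a = - s12 / s22"
  define b where "b = - (s11 + 2 * a * s12 + a^2 * s22) / (2 * s13)"
  define c where "c = 1 / sqrt s22"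
  define d where "d = 1 / s13"
  have "{x. aut_matrix a b c d *v x \<in> h} = span {X 2, X 3}"
    by (simp add: h aut_matrix_def span_X23)
  moreover have "transpose (aut_matrix a b c d) ** mat3 s11 s12 s13 s12 s22 0 s13 0 0 **
      aut_matrix a b c d = mat3 0 0 1 0 1 0 1 0 0"
    unfolding gram_aut_matrix Let_def mat3_eq_iff mat3_nth
    using assms by (simp add: a_def b_def c_def d_def field_simps)
  ultimately show ?thesis
    using equiv_to_kundt_model_case4 by (rule equiv_to_kundt_model_aut_matrix)
      (use assms in \<open>simp_all add: c_def d_def\<close>)
qed

lemma equiv_to_kundt_model_x1_eq_0_unit:
  assumes h: "h = {x. x$1 = 0}" and "s12 \<noteq> s13"
  shows "equiv_to_kundt_model h (mat3 s11 s12 s13 s12 1 1 s13 1 1)"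
proof -
  have ordered: "equiv_to_kundt_model h (mat3 r11 r12 r13 r12 1 1 r13 1 1)" if "r13 < r12"
    for r11 r12 r13
  proof -
    \<comment> \<open>b = - r12 - a kills the (1,2) entry, and a is then chosen to kill the (1,1) entry\<close>
    define a where "a = (2 * r12 * r13 - r12^2 - r11) / (2 * (r12 - r13))"
    define \<beta> where "\<beta> = 2 / (r12 - r13)"
    have "2 * a * (r12 - r13) = 2 * r12 * r13 - r12^2 - r11"
      using that by (simp add: a_def field_simps)
    moreover have "r11 + 2 * a * r12 + 2 * (- r12 - a) * r13 + a^2 + 2 * a * (- r12 - a)
        + (- r12 - a)^2 = r11 + 2 * a * (r12 - r13) - 2 * r12 * r13 + r12^2"
      by (simp add: power2_eq_square algebra_simps)
    ultimately have g11: "r11 + 2 * a * r12 + 2 * (- r12 - a) * r13 + a^2 + 2 * a * (- r12 - a)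
        + (- r12 - a)^2 = 0"
      by simp
    have "{x. aut_matrix a (- r12 - a) 1 1 *v x \<in> h} = span {X 2, X 3}"
      by (simp add: h aut_matrix_def span_X23)
    moreover have "transpose (aut_matrix a (- r12 - a) 1 1) ** mat3 r11 r12 r13 r12 1 1 r13 1 1 **
        aut_matrix a (- r12 - a) 1 1 = mat3 0 0 (-2/\<beta>) 0 1 1 (-2/\<beta>) 1 1"
      unfolding gram_aut_matrix Let_def mat3_eq_iff mat3_nth
      using that g11 by (simp add: \<beta>_def)
    moreover have "\<beta> > 0"
      using that by (simp add: \<beta>_def)
    then have "equiv_to_kundt_model (span {X 2, X 3}) (mat3 0 0 (-2/\<beta>) 0 1 1 (-2/\<beta>) 1 1)"
      by (rule equiv_to_kundt_model_case3)
    ultimately show ?thesis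
      by (rule equiv_to_kundt_model_aut_matrix) simp_all
  qed
  show ?thesis
  proof (cases "s13 < s12")
    case True
    then show ?thesis by (rule ordered)
  next
    case False
    \<comment> \<open>X2 \<mapsto> -X2, X3 \<mapsto> -X3 reverses the order of s12 and s13\<close>
    have "{x. aut_matrix 0 0 (-1) (-1) *v x \<in> h} = h"
      by (simp add: h aut_matrix_def)
    moreover have "transpose (aut_matrix 0 0 (-1) (-1)) ** mat3 s11 s12 s13 s12 1 1 s13 1 1 **
        aut_matrix 0 0 (-1) (-1) = mat3 s11 (-s12) (-s13) (-s12) 1 1 (-s13) 1 1"
      by (simp add: gram_aut_matrix Let_def)
    moreover have "equiv_to_kundt_model h (mat3 s11 (-s12) (-s13) (-s12) 1 1 (-s13) 1 1)"
      using False \<open>s12 \<noteq> s13\<close> by (intro ordered) simp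
    ultimately show ?thesis
      by (rule equiv_to_kundt_model_aut_matrix) simp_all
  qed
qed

lemma equiv_to_kundt_model_x1_eq_0_generic:
  assumes h: "h = {x. x$1 = 0}" and "k > 0" "p \<noteq> 0" "q \<noteq> 0" and "p * s12 + q * s13 \<noteq> 0"
  shows "equiv_to_kundt_model h
    (mat3 s11 s12 s13 s12 (k * q^2) (- k * p * q) s13 (- k * p * q) (k * p^2))"
proof -
  \<comment> \<open>scaling X2 and X3 turns the restriction k (q x2 - p x3)^2 of the form to h into (x2 + x3)^2\<close>
  define c where "c = 1 / (sqrt k * q)"
  define d where "d = - 1 / (sqrt k * p)"
  have "{x. aut_matrix 0 0 c d *v x \<in> h} = h"
    by (simp add: h aut_matrix_def)
  moreover have "transpose (aut_matrix 0 0 c d) **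
      mat3 s11 s12 s13 s12 (k * q^2) (- k * p * q) s13 (- k * p * q) (k * p^2) ** aut_matrix 0 0 c d
      = mat3 s11 (c * s12) (d * s13) (c * s12) 1 1 (d * s13) 1 1"
    unfolding gram_aut_matrix Let_def mat3_eq_iff mat3_nth
    using assms by (simp add: c_def d_def power2_eq_square field_simps)
  moreover have "c * s12 - d * s13 = (p * s12 + q * s13) / (sqrt k * p * q)"
    using assms by (simp add: c_def d_def field_simps)
  then have "c * s12 - d * s13 \<noteq> 0"
    using assms by simp
  then have "c * s12 \<noteq> d * s13"
    by simp
  then have "equiv_to_kundt_model h (mat3 s11 (c * s12) (d * s13) (c * s12) 1 1 (d * s13) 1 1)"
    by (rule equiv_to_kundt_model_x1_eq_0_unit[OF h])
  ultimately show ?thesis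
    by (rule equiv_to_kundt_model_aut_matrix) (use assms in \<open>simp_all add: c_def d_def\<close>)
qed

lemma gram_shape_x1_eq_0:
  assumes e: "kundt_null_vector h S e" and h: "h = {x. x$1 = 0}"
    and S: "S = mat3 s11 s12 s13 s12 s22 s23 s13 s23 s33"
  obtains k where "k > 0" "s22 = k * (e$3)^2" "s23 = - k * e$2 * e$3" "s33 = k * (e$2)^2"
    and "e$2 * s12 + e$3 * s13 \<noteq> 0"
proof -
  define p q where "p = e$2" and "q = e$3"
  have "e$1 = 0" "p^2 + q^2 > 0"
    using e h by (auto simp: kundt_null_vector_def vec3_eq_iff p_def q_def sum_power2_gt_zero_iff)
  moreover have "X 2 \<in> h" "X 3 \<in> h"
    by (simp_all add: h X_nth)
  then have "(S *v e) $ 2 = 0" "(S *v e) $ 3 = 0"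
    using kundt_null_vector_covector(2)[OF e] by force+
  ultimately have ker: "p * s22 + q * s23 = 0" "p * s23 + q * s33 = 0"
    by (simp_all add: S p_def q_def mult.commute)
  have "p^2 * s22 - q^2 * s33 = p * (p * s22 + q * s23) - q * (p * s23 + q * s33)"
    "(p^2 + q^2) * s23 + p * q * (s22 + s33) = p * (p * s23 + q * s33) + q * (p * s22 + q * s23)"
    by (simp_all add: power2_eq_square algebra_simps)
  with ker have eqs: "(p^2 + q^2) * s22 = (s22 + s33) * q^2" "(p^2 + q^2) * s23 = - (s22 + s33) * p * q"
    "(p^2 + q^2) * s33 = (s22 + s33) * p^2"
    by (simp_all add: algebra_simps)
  define k where "k = (s22 + s33) / (p^2 + q^2)"
  have "p^2 + q^2 \<noteq> 0"
    using \<open>p^2 + q^2 > 0\<close> by linarith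
  with eqs have shape: "s22 = k * q^2" "s23 = - k * p * q" "s33 = k * p^2"
    unfolding k_def by (simp_all add: field_simps)
  have "det S < 0"
    using e by (simp add: kundt_null_vector_def)
  then have "k * (p * s12 + q * s13)^2 > 0"
    by (simp add: S shape det_mat3 power2_eq_square algebra_simps)
  then have "k > 0" "p * s12 + q * s13 \<noteq> 0"
    by (auto simp: zero_less_mult_iff)
  with shape show ?thesis
    using that unfolding p_def q_def by blast
qed

lemma equiv_to_kundt_model_x1_eq_0:
  assumes e: "kundt_null_vector h S e" and h: "h = {x. x$1 = 0}"
  shows "equiv_to_kundt_model h S"
proof -
  have null_X3: "equiv_to_kundt_model h S'" if e': "kundt_null_vector h S' e'" and "e'$2 = 0" for S' e'
  proof -
    obtain s11 s12 s13 s22 s23 s33 where S': "S' = mat3 s11 s12 s13 s12 s22 s23 s13 s23 s33"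
      using e' by (auto simp: kundt_null_vector_def elim: symmetric_mat3E)
    obtain k where "k > 0" "s22 = k * (e'$3)^2" "s23 = 0" "s33 = 0" "e'$3 * s13 \<noteq> 0"
      using gram_shape_x1_eq_0[OF e' h S'] \<open>e'$2 = 0\<close> by auto
    then have "s22 > 0" "s13 \<noteq> 0"
      by auto
    then show ?thesis
      unfolding S' \<open>s23 = 0\<close> \<open>s33 = 0\<close> by (rule equiv_to_kundt_model_x1_eq_0_null_X3[OF h])
  qed
  consider "e$2 = 0" | "e$3 = 0" | "e$2 \<noteq> 0" "e$3 \<noteq> 0"
    by blast
  then show ?thesis
  proof cases
    case 1
    then show ?thesis by (rule null_X3[OF e])
  next
    case 2
    have "{x. swap_matrix *v x \<in> h} = h"
      by (simp add: h swap_matrix_def)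
    moreover have "equiv_to_kundt_model h (transpose swap_matrix ** S ** swap_matrix)"
      using kundt_null_vector_swap_matrix[OF e] 2
      by (intro null_X3[where e' = "swap_matrix *v e"]) (simp_all add: h swap_matrix_def)
    ultimately show ?thesis
      by (rule equiv_to_kundt_model_swap_matrix[OF _ refl])
  next
    case 3
    obtain s11 s12 s13 s22 s23 s33 where S: "S = mat3 s11 s12 s13 s12 s22 s23 s13 s23 s33"
      using e by (auto simp: kundt_null_vector_def elim: symmetric_mat3E)
    obtain k where "k > 0"
      and shape: "s22 = k * (e$3)^2" "s23 = - k * e$2 * e$3" "s33 = k * (e$2)^2" and "e$2 * s12 + e$3 * s13 \<noteq> 0"
      by (rule gram_shape_x1_eq_0[OF e h S])
    then show ?thesis
      unfolding S shape using 3 by (intro equiv_to_kundt_model_x1_eq_0_generic[OF h])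
  qed
qed

lemma equiv_to_kundt_model_x2_eq_0:
  assumes h: "h = {x. x$2 = 0}" and "g > 0" "s23 \<noteq> 0"
  shows "equiv_to_kundt_model h (mat3 g 0 0 0 s s23 0 s23 0)"
proof -
  have h_aut: "{x. aut_matrix 0 0 c d *v x \<in> h} = span {X 3, X 1}" if "c \<noteq> 0" for c d
    using that by (simp add: h aut_matrix_def span_X31)
  show ?thesis
  proof (cases "s = 0")
    case True
    have "transpose (aut_matrix 0 0 1 (-1/s23)) ** mat3 g 0 0 0 s s23 0 s23 0 **
        aut_matrix 0 0 1 (-1/s23) = mat3 g 0 0 0 0 (-1) 0 (-1) 0"
      using True assms by (simp add: gram_aut_matrix Let_def)
    from equiv_to_kundt_model_aut_matrix[OF h_aut this equiv_to_kundt_model_case1] show ?thesis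
      using assms by simp
  next
    case False
    \<comment> \<open>l = c^2 s must have the sign of s\<close>
    define l where "l = (if s > 0 then sqrt g else - sqrt g)"
    have "l / s > 0" "l^2 = g" "l \<noteq> 0"
      using False \<open>g > 0\<close> by (auto simp: l_def divide_pos_neg)
    define c where "c = sqrt (l / s)"
    define d where "d = 1 / (c * s23)"
    have "c > 0" "c^2 * s = l"
      using \<open>l / s > 0\<close> False by (simp_all add: c_def)
    then have "transpose (aut_matrix 0 0 c d) ** mat3 g 0 0 0 s s23 0 s23 0 ** aut_matrix 0 0 c d
        = mat3 (l^2) 0 0 0 l 1 0 1 0"
      using \<open>l^2 = g\<close> assms by (simp add: gram_aut_matrix Let_def d_def)
    from equiv_to_kundt_model_aut_matrix[OF h_aut this equiv_to_kundt_model_case2] show ?thesis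
      using \<open>l \<noteq> 0\<close> \<open>c > 0\<close> assms by (simp add: d_def)
  qed
qed

lemma gram_shape_x2_eq:
  assumes e: "kundt_null_vector h S e" and h: "h = {x. x$2 = t * x$1}"
    and S: "S = mat3 s11 s12 s13 s12 s22 s23 s13 s23 s33"
  shows "s33 = 0" "s13 = - t * s23" "s23 \<noteq> 0" "s11 + 2 * t * s12 + t^2 * s22 > 0"
proof -
  define g where "g = S *v e"
  have "X 3 \<in> h" "X 1 + t *\<^sub>R X 2 \<in> h"
    by (simp_all add: h X_nth)
  then have "g \<bullet> X 3 = 0" "g \<bullet> (X 1 + t *\<^sub>R X 2) = 0"
    using kundt_null_vector_covector(2)[OF e] unfolding g_def by blast+
  then have g3: "g$3 = 0" and g12: "g$1 + t * g$2 = 0"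
    by (simp_all add: inner_add_right)
  \<comment> \<open>if e1 \<noteq> 0, the clause for w = X2 makes e orthogonal to X2 as well as to h\<close>
  have "e$1 * g$2 = 0"
    using kundt_null_vector_covector(3)[OF e, of "X 2"] unfolding g_def
    by (simp add: inner_vec3 X_nth)
  moreover have "g \<noteq> 0"
    using kundt_null_vector_covector(1)[OF e] by (simp add: g_def)
  ultimately have "e$1 = 0"
    using g3 g12 by (auto simp: vec3_eq_iff)
  moreover have "e \<in> h" "e \<noteq> 0"
    using e by (simp_all add: kundt_null_vector_def)
  ultimately have "e$2 = 0" "e$3 \<noteq> 0"
    by (auto simp: h vec3_eq_iff)
  with \<open>e$1 = 0\<close> g3 g12 have "e$3 * s33 = 0" "e$3 * (s13 + t * s23) = 0"
    by (simp_all add: g_def S algebra_simps)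
  with \<open>e$3 \<noteq> 0\<close> show "s33 = 0" "s13 = - t * s23"
    by (simp_all add: eq_neg_iff_add_eq_0)
  moreover have "det S < 0"
    using e by (simp add: kundt_null_vector_def)
  ultimately have "s23^2 * (s11 + 2 * t * s12 + t^2 * s22) > 0"
    by (simp add: S det_mat3 power2_eq_square algebra_simps)
  then show "s23 \<noteq> 0" "s11 + 2 * t * s12 + t^2 * s22 > 0"
    by (auto simp: zero_less_mult_iff)
qed

lemma equiv_to_kundt_model_x2_eq:
  assumes e: "kundt_null_vector h S e" and h: "h = {x. x$2 = t * x$1}"
  shows "equiv_to_kundt_model h S"
proof -
  obtain s11 s12 s13 s22 s23 s33 where S: "S = mat3 s11 s12 s13 s12 s22 s23 s13 s23 s33"
    using e by (auto simp: kundt_null_vector_def elim: symmetric_mat3E)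
  note shape = gram_shape_x2_eq[OF e h S]
  define b where "b = - (s12 + t * s22) / s23"
  have "{x. aut_matrix t b 1 1 *v x \<in> h} = {x. x$2 = 0}"
    by (simp add: h aut_matrix_def)
  moreover have "transpose (aut_matrix t b 1 1) ** S ** aut_matrix t b 1 1 =
      mat3 (s11 + 2 * t * s12 + t^2 * s22) 0 0 0 s22 s23 0 s23 0"
    unfolding S gram_aut_matrix Let_def mat3_eq_iff mat3_nth
    using shape by (simp add: b_def power2_eq_square field_simps)
  moreover have "equiv_to_kundt_model {x. x$2 = 0}
      (mat3 (s11 + 2 * t * s12 + t^2 * s22) 0 0 0 s22 s23 0 s23 0)"
    using shape by (intro equiv_to_kundt_model_x2_eq_0) simp_all
  ultimately show ?thesis
    by (rule equiv_to_kundt_model_aut_matrix) simp_all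
qed

lemma equiv_to_kundt_model_x3_eq:
  assumes e: "kundt_null_vector h S e" and h: "h = {x. x$3 = t * x$1}"
  shows "equiv_to_kundt_model h S"
proof -
  have h': "{x. swap_matrix *v x \<in> h} = {x. x$2 = (- t) * x$1}"
    by (simp add: h swap_matrix_def)
  have "kundt_null_vector {x. x$2 = (- t) * x$1} (transpose swap_matrix ** S ** swap_matrix)
      (swap_matrix *v e)"
    using kundt_null_vector_swap_matrix[OF e] unfolding h' .
  then have "equiv_to_kundt_model {x. x$2 = (- t) * x$1}
      (transpose swap_matrix ** S ** swap_matrix)"
    by (rule equiv_to_kundt_model_x2_eq[OF _ refl])
  then show ?thesis
    by (rule equiv_to_kundt_model_swap_matrix[OF h' refl])
qed

theorem theorem5p4:
  assumes "kundt_pair h S"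
  shows "\<exists>h0 S0. kundt_equiv h S h0 S0 \<and>
    ((\<exists>l>0. S0 = mat3 l 0 0 0 0 (-1) 0 (-1) 0 \<and>
        (h0 = span {X 2, X 1} \<or> h0 = span {X 3, X 1})) \<or>
     (\<exists>l. l \<noteq> 0 \<and> S0 = mat3 (l^2) 0 0 0 l 1 0 1 0 \<and> h0 = span {X 3, X 1}) \<or>
     (\<exists>b>0. S0 = mat3 0 0 (-2/b) 0 1 1 (-2/b) 1 1 \<and> h0 = span {X 2, X 3}) \<or>
     (S0 = mat3 0 0 1 0 1 0 1 0 0 \<and> h0 = span {X 2, X 3}))"
proof -
  obtain e where e: "kundt_null_vector h S e"
    using assms by (rule kundt_pair_null_vector)
  have "subspace h" "dim h = 2" "\<And>u v. u \<in> h \<Longrightarrow> v \<in> h \<Longrightarrow> sol_br u v \<in> h"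
    using assms by (simp_all add: kundt_pair_def)
  then have "equiv_to_kundt_model h S"
  proof (rule sol_codim1_subalgebra_cases)
    assume "h = {x. x$1 = 0}"
    with e show ?thesis by (rule equiv_to_kundt_model_x1_eq_0)
  next
    fix t assume "h = {x. x$2 = t * x$1}"
    with e show ?thesis by (rule equiv_to_kundt_model_x2_eq)
  next
    fix t assume "h = {x. x$3 = t * x$1}"
    with e show ?thesis by (rule equiv_to_kundt_model_x3_eq)
  qed
  then show ?thesis
    unfolding equiv_to_kundt_model_def kundt_model_def .
qed

end
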